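(* Let $(\alpha,\beta)$ be a harmonic $\mathrm{SO}(4)$-structure on a $7$-dimensional Lie algebra $\mathfrak g$, and let $\eta\in\Lambda^{1,0}$ be a $1$-form of unit norm such that $\mathfrak n=\ker\eta$ is a Lie subalgebra. Then $\mathfrak n$ carries an induced half-flat $\mathrm{SL}(3,\mathbb R)$-structure $(\omega,\rho)$ with $\alpha|_{\mathfrak n}=\tfrac{\sqrt6}{3}\rho$ and $\beta|_{\mathfrak n}=-\tfrac16\omega^2$. If in addition $\mathfrak n$ is an ideal, then the derivation $b=\mathrm{ad}(\sqrt2\,\eta^\sharp)|_{\mathfrak n}\in\mathrm{Der}(\mathfrak n)$ satisfies $$b\cdot\rho+d\omega=0,\qquad -\tfrac14\,b\cdot\omega^2+d\hat\rho+2\,d\gamma=0,$$ where $d$ is the differential of $\mathfrak n$ and $\hat\rho,\gamma$ are the forms associated with the $\mathrm{SL}(3,\mathbb R)$-structure. Conversely, if $\mathfrak n$ is a $6$-dimensional Lie algebra with a derivation $b$ and a half-flat $\mathrm{SL}(3,\mathbb R)$-structure satisfying these two equations, then the semidirect product $\mathfrak g=\mathfrak n\rtimes_b\mathbb R$ ($\mathfrak g=\mathfrak n\oplus\mathbb RT$, $[T,X]=b(X)$) admits a harmonic $\mathrm{SO}(4)$-structure.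
   Context: $\mathrm{SO}(4)$-structures: on $\mathbb R^7$ with dual basis $e^1,\dots,e^7$, $w^s=e^{4+s}$, set $\omega_1=e^{12}-e^{34}$, $\omega_2=e^{13}-e^{42}$, $\omega_3=e^{14}-e^{23}$, $\alpha=\sum_s\omega_s\wedge w^s-3w^{123}$, $\beta=-\omega_1\wedge w^{23}-\omega_2\wedge w^{31}-\omega_3\wedge w^{12}-3e^{1234}$. An $\mathrm{SO}(4)$-structure on a Lie algebra $\mathfrak g$ is a pair $(\alpha,\beta)$ having this form in some ("adapted") coframe $e^1,\dots,e^4,w^1,w^2,w^3$, declared orthonormal; $\eta^\sharp$ is the metric dual of $\eta$; $\Lambda^{1,0}=\mathrm{span}(e^1,\dots,e^4)$; harmonic means $d\alpha=0=d\beta$. $\mathrm{SL}(3,\mathbb R)$-structure on a $6$-dimensional Lie algebra $\mathfrak n$: a pair $(\omega,\rho)$ such that for some coframe $E^1,\dots,E^6$, $\omega=E^{12}+E^{34}+E^{56}$ and $\rho=E^{135}+E^{246}$; the structure then determines $\hat\rho=E^{135}-E^{246}$ and the $3$-form $\gamma=(E^1-E^2)\wedge(E^3-E^4)\wedge(E^5-E^6)$, both fixed by the stabiliser $\mathrm{SL}(3,\mathbb R)$ of $(\omega,\rho)$. It is half-flat if $d\rho=0$ and $d(\omega^2)=0$. A derivation $b$ of $\mathfrak n$ acts on $\Lambda^*\mathfrak n^*$ by the natural induced action extended as a derivation, $(b\cdot\theta)(v)=-\theta(bv)$ for $\theta\in\mathfrak n^*$. *)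

theory Defs
  imports "HOL-Analysis.Analysis"
begin

(* Exterior forms on a real vector space 'a are represented as functions on lists of
   vectors ('a list => real); a k-form is only ever evaluated on lists of length k. *)
type_synonym 'a form = "'a list \<Rightarrow> real"

definition lie_algebra :: "('a::real_vector \<Rightarrow> 'a \<Rightarrow> 'a) \<Rightarrow> bool" where
  "lie_algebra br \<longleftrightarrow> bilinear br \<and> (\<forall>x. br x x = 0) \<and>
     (\<forall>x y z. br x (br y z) + br y (br z x) + br z (br x y) = 0)"

definition lie_derivation :: "('a::real_vector \<Rightarrow> 'a \<Rightarrow> 'a) \<Rightarrow> ('a \<Rightarrow> 'a) \<Rightarrow> bool" where
  "lie_derivation br b \<longleftrightarrow> linear b \<and> (\<forall>x y. b (br x y) = br (b x) y + br x (b y))"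

definition coframe :: "nat \<Rightarrow> 'a::real_vector set \<Rightarrow> (nat \<Rightarrow> 'a \<Rightarrow> real) \<Rightarrow> bool" where
  "coframe m V e \<longleftrightarrow> (\<forall>i\<in>{1..m}. linear (e i)) \<and>
     (\<forall>x\<in>V. (\<forall>i\<in>{1..m}. e i x = 0) \<longrightarrow> x = 0) \<and>
     (\<forall>c::nat \<Rightarrow> real. \<exists>x\<in>V. \<forall>i\<in>{1..m}. e i x = c i)"

definition omit :: "nat \<Rightarrow> 'x list \<Rightarrow> 'x list" where
  "omit i xs = take i xs @ drop (Suc i) xs"

definition dform :: "('a \<Rightarrow> 'a \<Rightarrow> 'a) \<Rightarrow> 'a form \<Rightarrow> 'a form" where
  "dform br \<theta> xs = (\<Sum>i<length xs. \<Sum>j\<in>{i<..<length xs}.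
      (-1) ^ (i + j) * \<theta> (br (xs ! i) (xs ! j) # omit i (omit j xs)))"

definition wedge1 :: "('a \<Rightarrow> real) list \<Rightarrow> 'a form" where
  "wedge1 fs xs = (\<Sum>p\<in>{p. p permutes {..<length fs}}.
      of_int (sign p) * (\<Prod>i<length fs. (fs ! i) (xs ! (p i))))"

definition wedge :: "nat \<Rightarrow> nat \<Rightarrow> 'a form \<Rightarrow> 'a form \<Rightarrow> 'a form" where
  "wedge p q A B xs = (\<Sum>s\<in>{s. s permutes {..<p+q}}.
      of_int (sign s) * A (map (\<lambda>i. xs ! (s i)) [0..<p]) * B (map (\<lambda>i. xs ! (s i)) [p..<p+q]))
      / (fact p * fact q)"

definition der_act :: "('a \<Rightarrow> 'a) \<Rightarrow> 'a form \<Rightarrow> 'a form" where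
  "der_act b \<theta> xs = - (\<Sum>i<length xs. \<theta> (xs[i := b (xs ! i)]))"

(* SO(4)-structure forms in a coframe e 1..e 7, with w^s = e (4+s) *)
definition so4_om :: "(nat \<Rightarrow> 'a \<Rightarrow> real) \<Rightarrow> nat \<Rightarrow> 'a form" where
  "so4_om e s xs = (if s = 1 then wedge1 [e 1, e 2] xs - wedge1 [e 3, e 4] xs
     else if s = 2 then wedge1 [e 1, e 3] xs - wedge1 [e 4, e 2] xs
     else wedge1 [e 1, e 4] xs - wedge1 [e 2, e 3] xs)"

definition so4_alpha :: "(nat \<Rightarrow> 'a \<Rightarrow> real) \<Rightarrow> 'a form" where
  "so4_alpha e xs = (\<Sum>s\<in>{1,2,3::nat}. wedge 2 1 (so4_om e s) (wedge1 [e (4+s)]) xs)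
     - 3 * wedge1 [e 5, e 6, e 7] xs"

definition so4_beta :: "(nat \<Rightarrow> 'a \<Rightarrow> real) \<Rightarrow> 'a form" where
  "so4_beta e xs = - wedge 2 2 (so4_om e 1) (wedge1 [e 6, e 7]) xs
     - wedge 2 2 (so4_om e 2) (wedge1 [e 7, e 5]) xs
     - wedge 2 2 (so4_om e 3) (wedge1 [e 5, e 6]) xs
     - 3 * wedge1 [e 1, e 2, e 3, e 4] xs"

definition sl3_omega :: "(nat \<Rightarrow> 'a \<Rightarrow> real) \<Rightarrow> 'a form" where
  "sl3_omega E xs = wedge1 [E 1, E 2] xs + wedge1 [E 3, E 4] xs + wedge1 [E 5, E 6] xs"

definition sl3_rho :: "(nat \<Rightarrow> 'a \<Rightarrow> real) \<Rightarrow> 'a form" where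
  "sl3_rho E xs = wedge1 [E 1, E 3, E 5] xs + wedge1 [E 2, E 4, E 6] xs"

definition sl3_rhohat :: "(nat \<Rightarrow> 'a \<Rightarrow> real) \<Rightarrow> 'a form" where
  "sl3_rhohat E xs = wedge1 [E 1, E 3, E 5] xs - wedge1 [E 2, E 4, E 6] xs"

definition sl3_gamma :: "(nat \<Rightarrow> 'a \<Rightarrow> real) \<Rightarrow> 'a form" where
  "sl3_gamma E = wedge1 [\<lambda>x. E 1 x - E 2 x, \<lambda>x. E 3 x - E 4 x, \<lambda>x. E 5 x - E 6 x]"

text \<open>The semidirect product n \<rtimes>_b R = n + R T with [T,X] = b X.\<close>
definition semidirect :: "('n::real_vector \<Rightarrow> 'n \<Rightarrow> 'n) \<Rightarrow> ('n \<Rightarrow> 'n) \<Rightarrow> 'n \<times> real \<Rightarrow> 'n \<times> real \<Rightarrow> 'n \<times> real" where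
  "semidirect br b p q = (br (fst p) (fst q) + snd p *\<^sub>R b (fst q) - snd q *\<^sub>R b (fst p), 0)"

end

theory Submission
  imports Defs
begin

(* Both directions are computations in adapted coframes. Left multiplication of (e^1,...,e^4)
   by the unit quaternion a lies in the SU(2) inside SO(4) that fixes \<omega>_1, \<omega>_2, \<omega>_3, so it
   leaves \<alpha> and \<beta> unchanged and turns \<eta> into e^1, with metric dual v. On n = ker e^1 the
   1-forms E^(2k-1), E^(2k) = \<plusminus>(\<surd>2/2)(e^(k+1) \<mp> \<surd>3 w^k) form an SL(3,R)-coframe in which
   \<alpha>|n = (\<surd>6/3) \<rho>, \<beta>|n = -\<omega>\<^sup>2/6, \<iota>_v \<alpha> = -\<omega>/\<surd>3 and \<iota>_v \<beta> = -(\<surd>2/3)(\<rho>hat + 2\<gamma>).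
   Evaluating d\<alpha> = 0 and d\<beta> = 0 on vectors of n gives half-flatness; when n is an ideal,
   ad v preserves n and evaluating them on v and vectors of n gives the two equations for
   b = ad(\<surd>2 v). Conversely, reading these formulas backwards defines an SO(4)-coframe on
   n \<rtimes>_b R, whose d\<alpha> and d\<beta> are combinations of the two equations and of half-flatness. *)

abbreviation sl3_omega2 :: "(nat \<Rightarrow> 'a \<Rightarrow> real) \<Rightarrow> 'a form" where
  "sl3_omega2 E \<equiv> wedge 2 2 (sl3_omega E) (sl3_omega E)"

section \<open>Forms evaluated on explicit lists of vectors\<close>

lemma wedge1_eval1: "wedge1 [f] [x] = f x"
proof -
  have l: "length [f] = 1" by simp
  have e: "{..<1::nat} = {0}" by auto
  show ?thesis unfolding wedge1_def l e by (simp add: permutes_sing)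
qed

lemma wedge1_eval2: "wedge1 [f,g] [x,y] = f x * g y - f y * g x"
proof -
  have l: "length [f,g] = 2" by simp
  have e: "{..<2::nat} = insert 0 {1}" by auto
  have f: "finite {1::nat}" "(0::nat) \<notin> {1}" by auto
  show ?thesis unfolding wedge1_def l e sum_over_permutations_insert[OF f]
    by (simp add: permutes_sing sign_swap_id swap_id_eq lessThan_nat_numeral)
qed

lemma wedge1_eval3: "wedge1 [f,g,h] [x,y,z] = f x * g y * h z - f x * g z * h y - f y * g x * h z
   + f y * g z * h x + f z * g x * h y - f z * g y * h x"
proof -
  have l: "length [f,g,h] = 3" by simp
  have e: "{..<3::nat} = insert 0 (insert 1 {2})" by auto
  have f: "finite (insert 1 {2::nat})" "(0::nat) \<notin> insert 1 {2}" by auto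
  have f2: "finite {2::nat}" "(1::nat) \<notin> {2}" by auto
  show ?thesis unfolding wedge1_def l e
    unfolding sum_over_permutations_insert[OF f] sum_over_permutations_insert[OF f2]
    by (simp add: permutes_sing sign_swap_id permutation_swap_id sign_compose permutation_compose
        swap_id_eq lessThan_nat_numeral algebra_simps)
qed

lemma wedge1_eval4: "wedge1 [f1,f2,f3,f4] [x1,x2,x3,x4] =
  f1 x1 * f2 x2 * f3 x3 * f4 x4 - f1 x1 * f2 x2 * f3 x4 * f4 x3 - f1 x1 * f2 x3 * f3 x2 * f4 x4 + f1 x1 * f2 x3 * f3 x4 * f4 x2 + f1 x1 * f2 x4 * f3 x2 * f4 x3 - f1 x1 * f2 x4 * f3 x3 * f4 x2
 - f1 x2 * f2 x1 * f3 x3 * f4 x4 + f1 x2 * f2 x1 * f3 x4 * f4 x3 + f1 x2 * f2 x3 * f3 x1 * f4 x4 - f1 x2 * f2 x3 * f3 x4 * f4 x1 - f1 x2 * f2 x4 * f3 x1 * f4 x3 + f1 x2 * f2 x4 * f3 x3 * f4 x1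
 + f1 x3 * f2 x1 * f3 x2 * f4 x4 - f1 x3 * f2 x1 * f3 x4 * f4 x2 - f1 x3 * f2 x2 * f3 x1 * f4 x4 + f1 x3 * f2 x2 * f3 x4 * f4 x1 + f1 x3 * f2 x4 * f3 x1 * f4 x2 - f1 x3 * f2 x4 * f3 x2 * f4 x1
 - f1 x4 * f2 x1 * f3 x2 * f4 x3 + f1 x4 * f2 x1 * f3 x3 * f4 x2 + f1 x4 * f2 x2 * f3 x1 * f4 x3 - f1 x4 * f2 x2 * f3 x3 * f4 x1 - f1 x4 * f2 x3 * f3 x1 * f4 x2 + f1 x4 * f2 x3 * f3 x2 * f4 x1"
proof -
  have l: "length [f1,f2,f3,f4] = 4" by simp
  have e: "{..<4::nat} = insert 0 (insert 1 (insert 2 {3}))" by auto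
  have f: "finite (insert 1 (insert 2 {3::nat}))" "(0::nat) \<notin> insert 1 (insert 2 {3})" by auto
  have f2: "finite (insert 2 {3::nat})" "(1::nat) \<notin> insert 2 {3}" by auto
  have f3: "finite {3::nat}" "(2::nat) \<notin> {3}" by auto
  show ?thesis unfolding wedge1_def l e
    unfolding sum_over_permutations_insert[OF f] sum_over_permutations_insert[OF f2]
      sum_over_permutations_insert[OF f3]
    by (simp add: permutes_sing sign_swap_id permutation_swap_id sign_compose permutation_compose
        swap_id_eq lessThan_nat_numeral algebra_simps)
qed

lemma wedge_2_1_eval: "wedge 2 1 A B [x,y,z] = (A [x,y] * B [z] - A [x,z] * B [y] - A [y,x] * B [z]
   + A [y,z] * B [x] + A [z,x] * B [y] - A [z,y] * B [x]) / 2"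
proof -
  have e: "{..<2+1::nat} = insert 0 (insert 1 {2})" by auto
  have f: "finite (insert 1 {2::nat})" "(0::nat) \<notin> insert 1 {2}" by auto
  have f2: "finite {2::nat}" "(1::nat) \<notin> {2}" by auto
  have u: "[0..<2] = [0,1::nat]" "[2..<2+1] = [2::nat]" by (simp_all add: upt_rec)
  show ?thesis unfolding wedge_def e u
    unfolding sum_over_permutations_insert[OF f] sum_over_permutations_insert[OF f2]
    by (simp add: permutes_sing sign_swap_id permutation_swap_id sign_compose permutation_compose
        swap_id_eq algebra_simps)
qed

lemma wedge_2_2_eval: "wedge 2 2 A B [x,y,z,u] = (A [x,y] * B [z,u] - A [x,y] * B [u,z] - A [x,z] * B [y,u] + A [x,z] * B [u,y] + A [x,u] * B [y,z] - A [x,u] * B [z,y] - A [y,x] * B [z,u] + A [y,x] * B [u,z] + A [y,z] * B [x,u] - A [y,z] * B [u,x] - A [y,u] * B [x,z] + A [y,u] * B [z,x] + A [z,x] * B [y,u] - A [z,x] * B [u,y] - A [z,y] * B [x,u] + A [z,y] * B [u,x] + A [z,u] * B [x,y] - A [z,u] * B [y,x] - A [u,x] * B [y,z] + A [u,x] * B [z,y] + A [u,y] * B [x,z] - A [u,y] * B [z,x] - A [u,z] * B [x,y] + A [u,z] * B [y,x]) / 4"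
proof -
  have e: "{..<2+2::nat} = insert 0 (insert 1 (insert 2 {3}))" by auto
  have f: "finite (insert 1 (insert 2 {3::nat}))" "(0::nat) \<notin> insert 1 (insert 2 {3})" by auto
  have f2: "finite (insert 2 {3::nat})" "(1::nat) \<notin> insert 2 {3}" by auto
  have f3: "finite {3::nat}" "(2::nat) \<notin> {3}" by auto
  have u: "[0..<2] = [0,1::nat]" "[2..<2+2] = [2::nat,3]" by (simp_all add: upt_rec)
  show ?thesis unfolding wedge_def e u
    unfolding sum_over_permutations_insert[OF f] sum_over_permutations_insert[OF f2]
      sum_over_permutations_insert[OF f3]
    by (simp add: permutes_sing sign_swap_id permutation_swap_id sign_compose permutation_compose
        swap_id_eq algebra_simps)
qed

lemma dform_eval3: "dform br \<theta> [x0, x1, x2] =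
  - \<theta> [br x0 x1, x2] + \<theta> [br x0 x2, x1] - \<theta> [br x1 x2, x0]"
proof -
  have l: "length [x0,x1,x2] = 3" by simp
  have "{..<3::nat} = {0,1,2}" "{0<..<3::nat} = {1,2}" "{Suc 0<..<3::nat} = {2}" "{2<..<3::nat} = {}"
    by auto
  then show ?thesis unfolding dform_def l by (simp add: omit_def)
qed

lemma dform_eval4: "dform br \<theta> [x0, x1, x2, x3] =
  - \<theta> [br x0 x1, x2, x3] + \<theta> [br x0 x2, x1, x3] - \<theta> [br x0 x3, x1, x2]
  - \<theta> [br x1 x2, x0, x3] + \<theta> [br x1 x3, x0, x2] - \<theta> [br x2 x3, x0, x1]"
proof -
  have l: "length [x0,x1,x2,x3] = 4" by simp
  have "{..<4::nat} = {0,1,2,3}" "{0<..<4::nat} = {1,2,3}" "{Suc 0<..<4::nat} = {2,3}"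
    "{2<..<4::nat} = {3}" "{3<..<4::nat} = {}" by auto
  then show ?thesis unfolding dform_def l by (simp add: omit_def)
qed

lemma dform_eval5: "dform br \<theta> [x0, x1, x2, x3, x4] =
  - \<theta> [br x0 x1, x2, x3, x4] + \<theta> [br x0 x2, x1, x3, x4] - \<theta> [br x0 x3, x1, x2, x4]
  + \<theta> [br x0 x4, x1, x2, x3] - \<theta> [br x1 x2, x0, x3, x4] + \<theta> [br x1 x3, x0, x2, x4]
  - \<theta> [br x1 x4, x0, x2, x3] - \<theta> [br x2 x3, x0, x1, x4] + \<theta> [br x2 x4, x0, x1, x3]
  - \<theta> [br x3 x4, x0, x1, x2]"
proof -
  have "{..<5::nat} = {0,1,2,3,4}" "{0<..<5::nat} = {1,2,3,4}" "{Suc 0<..<5::nat} = {2,3,4}"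
    "{2<..<5::nat} = {3,4}" "{3<..<5::nat} = {4}" "{4<..<5::nat} = {}" by auto
  moreover have l: "length [x0,x1,x2,x3,x4] = 5" by simp
  ultimately show ?thesis unfolding dform_def l by (simp add: omit_def)
qed

lemma der_act_eval3:
  "der_act b \<theta> [x0, x1, x2] = - (\<theta> [b x0, x1, x2] + \<theta> [x0, b x1, x2] + \<theta> [x0, x1, b x2])"
  by (simp add: der_act_def lessThan_nat_numeral eval_nat_numeral)

lemma der_act_eval4: "der_act b \<theta> [x0, x1, x2, x3] =
  - (\<theta> [b x0, x1, x2, x3] + \<theta> [x0, b x1, x2, x3] + \<theta> [x0, x1, b x2, x3] + \<theta> [x0, x1, x2, b x3])"
  by (simp add: der_act_def lessThan_nat_numeral eval_nat_numeral)

lemma dform_eq_0_cong: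
  assumes "\<forall>ys. length ys = k \<longrightarrow> \<theta> ys = \<theta>' ys"
    and "\<forall>xs. length xs = Suc k \<longrightarrow> dform br \<theta> xs = 0"
  shows "\<forall>xs. length xs = Suc k \<longrightarrow> dform br \<theta>' xs = 0"
proof (intro allI impI)
  fix xs :: "'a list" assume len: "length xs = Suc k"
  have "dform br \<theta>' xs = dform br \<theta> xs"
    unfolding dform_def using assms(1) len by (intro sum.cong refl) (simp add: omit_def)
  then show "dform br \<theta>' xs = 0" using assms(2) len by simp
qed

lemma all_lists_length_2:
  "(\<forall>xs. length xs = 2 \<and> set xs \<subseteq> A \<longrightarrow> P xs) \<longleftrightarrow> (\<forall>x y. x \<in> A \<longrightarrow> y \<in> A \<longrightarrow> P [x,y])"
  by (auto simp: numeral_eq_Suc length_Suc_conv)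

lemma all_lists_length_3:
  "(\<forall>xs. length xs = 3 \<and> set xs \<subseteq> A \<longrightarrow> P xs) \<longleftrightarrow>
   (\<forall>x y z. x \<in> A \<longrightarrow> y \<in> A \<longrightarrow> z \<in> A \<longrightarrow> P [x,y,z])"
  by (auto simp: numeral_eq_Suc length_Suc_conv)

lemma all_lists_length_4:
  "(\<forall>xs. length xs = 4 \<and> set xs \<subseteq> A \<longrightarrow> P xs) \<longleftrightarrow>
   (\<forall>x y z u. x \<in> A \<longrightarrow> y \<in> A \<longrightarrow> z \<in> A \<longrightarrow> u \<in> A \<longrightarrow> P [x,y,z,u])"
  by (auto simp: numeral_eq_Suc length_Suc_conv)

lemma all_lists_length_5:
  "(\<forall>xs. length xs = 5 \<and> set xs \<subseteq> A \<longrightarrow> P xs) \<longleftrightarrow>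
   (\<forall>x y z u w. x \<in> A \<longrightarrow> y \<in> A \<longrightarrow> z \<in> A \<longrightarrow> u \<in> A \<longrightarrow> w \<in> A \<longrightarrow> P [x,y,z,u,w])"
  by (auto simp: numeral_eq_Suc length_Suc_conv)

lemmas all_lists_length_UNIV =
  all_lists_length_3[where A = UNIV, simplified] all_lists_length_4[where A = UNIV, simplified]
  all_lists_length_5[where A = UNIV, simplified]

declare One_nat_def [simp del]

lemma sum_1_to_4: "(\<Sum>i=1..4. f i) = f 1 + f 2 + f 3 + f (4::nat)"
proof -
  have "{1..4::nat} = {1,2,3,4}" by auto
  then show ?thesis by (simp add: add.assoc)
qed

lemma ball_1_to_6: "(\<forall>i\<in>{1..6::nat}. P i) \<longleftrightarrow> P 1 \<and> P 2 \<and> P 3 \<and> P 4 \<and> P 5 \<and> P 6"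
proof -
  have "{1..6::nat} = {1,2,3,4,5,6}" by auto
  then show ?thesis by simp
qed

lemma ball_1_to_7: "(\<forall>i\<in>{1..7::nat}. P i) \<longleftrightarrow> P 1 \<and> P 2 \<and> P 3 \<and> P 4 \<and> P 5 \<and> P 6 \<and> P 7"
proof -
  have "{1..7::nat} = {1,2,3,4,5,6,7}" by auto
  then show ?thesis by simp
qed

lemma sqrt_6_eq: "sqrt 6 = sqrt 2 * sqrt 3"
  by (simp add: real_sqrt_mult[symmetric])

lemma sqrt_2_sqrt_2: "sqrt 2 * (sqrt 2 * x) = 2 * x" "sqrt 2 * sqrt 2 = 2"
  by (simp_all add: mult.assoc[symmetric])

lemma sqrt_3_sqrt_3: "sqrt 3 * (sqrt 3 * x) = 3 * x" "sqrt 3 * sqrt 3 = 3"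
  by (simp_all add: mult.assoc[symmetric])

lemma linear_lincomb2:
  fixes f1 f2 :: "'a::real_vector \<Rightarrow> real"
  assumes "linear f1" "linear f2"
  shows "linear (\<lambda>x. c1 * f1 x + c2 * f2 x)"
  by (rule linearI) (simp_all add: linear_add[OF assms(1)] linear_add[OF assms(2)]
      linear_scale[OF assms(1)] linear_scale[OF assms(2)] algebra_simps)

lemma linear_lincomb4:
  fixes f1 f2 f3 f4 :: "'a::real_vector \<Rightarrow> real"
  assumes "linear f1" "linear f2" "linear f3" "linear f4"
  shows "linear (\<lambda>x. c1 * f1 x + c2 * f2 x + c3 * f3 x + c4 * f4 x)"
  by (rule linearI) (simp_all add: linear_add[OF assms(1)] linear_add[OF assms(2)]
      linear_add[OF assms(3)] linear_add[OF assms(4)] linear_scale[OF assms(1)]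
      linear_scale[OF assms(2)] linear_scale[OF assms(3)] linear_scale[OF assms(4)] algebra_simps)

lemma so4_alpha_expand: "so4_alpha g xs =
  wedge 2 1 (so4_om g 1) (wedge1 [g 5]) xs + wedge 2 1 (so4_om g 2) (wedge1 [g 6]) xs
  + wedge 2 1 (so4_om g 3) (wedge1 [g 7]) xs - 3 * wedge1 [g 5, g 6, g 7] xs"
  unfolding so4_alpha_def by (simp add: add.assoc)

lemma sl3_omega2_eval: "sl3_omega2 E [x,y,z,u] = 2 * (wedge1 [E 1, E 2, E 3, E 4] [x,y,z,u]
   + wedge1 [E 1, E 2, E 5, E 6] [x,y,z,u] + wedge1 [E 3, E 4, E 5, E 6] [x,y,z,u])"
  unfolding wedge_2_2_eval sl3_omega_def wedge1_eval2 wedge1_eval4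
  by (simp add: algebra_simps add_divide_distrib diff_divide_distrib)

lemma sl3_rho_swap: "sl3_rho E [a,b,c] = - sl3_rho E [b,a,c]" "sl3_rho E [a,b,c] = sl3_rho E [c,a,b]"
  unfolding sl3_rho_def wedge1_eval3 by (simp_all add: algebra_simps)

lemma sl3_omega2_swap: "sl3_omega2 E [a,b,c,d] = - sl3_omega2 E [b,a,c,d]"
  "sl3_omega2 E [a,b,c,d] = sl3_omega2 E [c,a,b,d]"
  "sl3_omega2 E [a,b,c,d] = - sl3_omega2 E [d,a,b,c]"
  unfolding sl3_omega2_eval wedge1_eval4 by (simp_all add: algebra_simps)

locale linear_coframe6 =
  fixes E :: "nat \<Rightarrow> 'a::real_vector \<Rightarrow> real"
  assumes lin1: "linear (E 1)" and lin2: "linear (E 2)" and lin3: "linear (E 3)"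
    and lin4: "linear (E 4)" and lin5: "linear (E 5)" and lin6: "linear (E 6)"
begin

lemmas linear_simps = linear_add[OF lin1] linear_add[OF lin2] linear_add[OF lin3]
  linear_add[OF lin4] linear_add[OF lin5] linear_add[OF lin6]
  linear_diff[OF lin1] linear_diff[OF lin2] linear_diff[OF lin3]
  linear_diff[OF lin4] linear_diff[OF lin5] linear_diff[OF lin6]
  linear_scale[OF lin1] linear_scale[OF lin2] linear_scale[OF lin3]
  linear_scale[OF lin4] linear_scale[OF lin5] linear_scale[OF lin6]

text \<open>Linearity is only needed in the first slot: the swap lemmas move the argument of interest
  there. The combination u + s w1 - t w2 is the shape of a bracket in the semidirect product.\<close>

lemma sl3_omega_lin:
  "sl3_omega E [u + s *\<^sub>R w1 - t *\<^sub>R w2, a] =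
     sl3_omega E [u,a] + s * sl3_omega E [w1,a] - t * sl3_omega E [w2,a]"
  unfolding sl3_omega_def wedge1_eval2 by (simp add: linear_simps algebra_simps)

lemma sl3_rho_lin:
  "sl3_rho E [u + s *\<^sub>R w1 - t *\<^sub>R w2, a, b] =
     sl3_rho E [u,a,b] + s * sl3_rho E [w1,a,b] - t * sl3_rho E [w2,a,b]"
  "sl3_rho E [c *\<^sub>R u, a, b] = c * sl3_rho E [u,a,b]"
  unfolding sl3_rho_def wedge1_eval3 by (simp_all add: linear_simps algebra_simps)

lemma sl3_rhohat_lin:
  "sl3_rhohat E [u + s *\<^sub>R w1 - t *\<^sub>R w2, a, b] =
     sl3_rhohat E [u,a,b] + s * sl3_rhohat E [w1,a,b] - t * sl3_rhohat E [w2,a,b]"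
  unfolding sl3_rhohat_def wedge1_eval3 by (simp add: linear_simps algebra_simps)

lemma sl3_gamma_lin:
  "sl3_gamma E [u + s *\<^sub>R w1 - t *\<^sub>R w2, a, b] =
     sl3_gamma E [u,a,b] + s * sl3_gamma E [w1,a,b] - t * sl3_gamma E [w2,a,b]"
  unfolding sl3_gamma_def wedge1_eval3 by (simp add: linear_simps algebra_simps)

lemma sl3_omega2_lin:
  "sl3_omega2 E [u + s *\<^sub>R w1 - t *\<^sub>R w2, a, b, d] = sl3_omega2 E [u,a,b,d]
     + s * sl3_omega2 E [w1,a,b,d] - t * sl3_omega2 E [w2,a,b,d]"
  "sl3_omega2 E [c *\<^sub>R u, a, b, d] = c * sl3_omega2 E [u,a,b,d]"
  unfolding sl3_omega2_eval wedge1_eval4 by (simp_all add: linear_simps algebra_simps)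

end

section \<open>Rotating e^1 onto \<eta>\<close>

text \<open>Left multiplication of (e^1,...,e^4) by the quaternion a.\<close>

definition quat_rotate :: "(nat \<Rightarrow> real) \<Rightarrow> (nat \<Rightarrow> 'a \<Rightarrow> real) \<Rightarrow> nat \<Rightarrow> 'a \<Rightarrow> real" where
  "quat_rotate a e k x =
    (if k = 1 then a 1 * e 1 x + a 2 * e 2 x + a 3 * e 3 x + a 4 * e 4 x
     else if k = 2 then - a 2 * e 1 x + a 1 * e 2 x + a 4 * e 3 x - a 3 * e 4 x
     else if k = 3 then - a 3 * e 1 x - a 4 * e 2 x + a 1 * e 3 x + a 2 * e 4 x
     else if k = 4 then - a 4 * e 1 x + a 3 * e 2 x - a 2 * e 3 x + a 1 * e 4 x
     else e k x)"

lemma quat_rotate_ge_5: "quat_rotate a e 5 = e 5" "quat_rotate a e 6 = e 6" "quat_rotate a e 7 = e 7"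
  by (simp_all add: quat_rotate_def fun_eq_iff)

lemma so4_om_quat_rotate:
  "so4_om (quat_rotate a e) s [x,y] = (a 1^2 + a 2^2 + a 3^2 + a 4^2) * so4_om e s [x,y]"
  unfolding so4_om_def wedge1_eval2 by (simp add: quat_rotate_def algebra_simps power2_eq_square)

lemma wedge1_eq_so4_om_wedge_self:
  "wedge1 [h 1, h 2, h 3, h 4] [x,y,z,u] = -1/2 * wedge 2 2 (so4_om h 1) (so4_om h 1) [x,y,z,u]"
  unfolding wedge_2_2_eval so4_om_def wedge1_eval2 wedge1_eval4
  by (simp add: algebra_simps add_divide_distrib diff_divide_distrib)

lemma so4_alpha_quat_rotate:
  assumes "a 1^2 + a 2^2 + a 3^2 + a 4^2 = 1"
  shows "so4_alpha (quat_rotate a e) [x,y,z] = so4_alpha e [x,y,z]"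
  unfolding so4_alpha_expand wedge_2_1_eval so4_om_quat_rotate assms quat_rotate_ge_5 by simp

lemma so4_beta_quat_rotate:
  assumes "a 1^2 + a 2^2 + a 3^2 + a 4^2 = 1"
  shows "so4_beta (quat_rotate a e) [x,y,z,u] = so4_beta e [x,y,z,u]"
  unfolding so4_beta_def wedge1_eq_so4_om_wedge_self[of "quat_rotate a e"]
    wedge1_eq_so4_om_wedge_self[of e] wedge_2_2_eval so4_om_quat_rotate assms quat_rotate_ge_5
  by simp

lemma quat_rotate_inverse:
  "a 1 * quat_rotate a e 1 x - a 2 * quat_rotate a e 2 x - a 3 * quat_rotate a e 3 x - a 4 * quat_rotate a e 4 x
     = (a 1^2 + a 2^2 + a 3^2 + a 4^2) * e 1 x"
  "a 2 * quat_rotate a e 1 x + a 1 * quat_rotate a e 2 x - a 4 * quat_rotate a e 3 x + a 3 * quat_rotate a e 4 x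
     = (a 1^2 + a 2^2 + a 3^2 + a 4^2) * e 2 x"
  "a 3 * quat_rotate a e 1 x + a 4 * quat_rotate a e 2 x + a 1 * quat_rotate a e 3 x - a 2 * quat_rotate a e 4 x
     = (a 1^2 + a 2^2 + a 3^2 + a 4^2) * e 3 x"
  "a 4 * quat_rotate a e 1 x - a 3 * quat_rotate a e 2 x + a 2 * quat_rotate a e 3 x + a 1 * quat_rotate a e 4 x
     = (a 1^2 + a 2^2 + a 3^2 + a 4^2) * e 4 x"
  by (simp_all add: quat_rotate_def algebra_simps power2_eq_square)

lemma linear_quat_rotate:
  assumes lin: "\<forall>i\<in>{1..7}. linear (e i)" and k: "k \<in> {1..7}"
  shows "linear (quat_rotate a e k)"
proof -
  have l: "linear (e 1)" "linear (e 2)" "linear (e 3)" "linear (e 4)" using lin by auto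
  have "k \<in> {1,2,3,4} \<or> k \<in> {5..7}" using k by auto
  moreover have "linear (quat_rotate a e 1)"
    using linear_lincomb4[OF l, of "a 1" "a 2" "a 3" "a 4"] by (simp add: quat_rotate_def[abs_def])
  moreover have "linear (quat_rotate a e 2)"
    using linear_lincomb4[OF l, of "- a 2" "a 1" "a 4" "- a 3"]
    by (simp add: quat_rotate_def[abs_def] algebra_simps)
  moreover have "linear (quat_rotate a e 3)"
    using linear_lincomb4[OF l, of "- a 3" "- a 4" "a 1" "a 2"]
    by (simp add: quat_rotate_def[abs_def] algebra_simps)
  moreover have "linear (quat_rotate a e 4)"
    using linear_lincomb4[OF l, of "- a 4" "a 3" "- a 2" "a 1"]
    by (simp add: quat_rotate_def[abs_def] algebra_simps)
  moreover have "linear (quat_rotate a e k)" if "k \<in> {5..7}"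
    using that lin by (auto simp: quat_rotate_def[abs_def])
  ultimately show ?thesis by auto
qed

lemma coframe_quat_rotate:
  assumes cof: "coframe 7 UNIV e" and a: "a 1^2 + a 2^2 + a 3^2 + a 4^2 = 1"
  shows "coframe 7 UNIV (quat_rotate a e)"
  unfolding coframe_def
proof (intro conjI ballI allI impI)
  have lin: "\<forall>i\<in>{1..7}. linear (e i)" using cof by (simp add: coframe_def)
  fix i :: nat assume "i \<in> {1..7}"
  then show "linear (quat_rotate a e i)" by (rule linear_quat_rotate[OF lin])
next
  fix x assume "\<forall>i\<in>{1..7}. quat_rotate a e i x = 0"
  then have "\<forall>i\<in>{1..7}. e i x = 0"
    using quat_rotate_inverse[of a e x] a by (simp add: ball_1_to_7 quat_rotate_ge_5)
  then show "x = 0" using cof by (simp add: coframe_def)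
next
  fix c :: "nat \<Rightarrow> real"
  define d where "d k = (if k = 1 then a 1 * c 1 - a 2 * c 2 - a 3 * c 3 - a 4 * c 4
     else if k = 2 then a 2 * c 1 + a 1 * c 2 - a 4 * c 3 + a 3 * c 4
     else if k = 3 then a 3 * c 1 + a 4 * c 2 + a 1 * c 3 - a 2 * c 4
     else if k = 4 then a 4 * c 1 - a 3 * c 2 + a 2 * c 3 + a 1 * c 4 else c k)" for k :: nat
  obtain x where "\<forall>i\<in>{1..7}. e i x = d i" using cof unfolding coframe_def by blast
  then have ex: "e 1 x = d 1" "e 2 x = d 2" "e 3 x = d 3" "e 4 x = d 4"
    "e 5 x = c 5" "e 6 x = c 6" "e 7 x = c 7" by (simp_all add: ball_1_to_7 d_def)
  have "quat_rotate a e i x = (a 1^2 + a 2^2 + a 3^2 + a 4^2) * c i" if "i \<in> {1,2,3,4}" for i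
    using that by (auto simp: quat_rotate_def ex d_def algebra_simps power2_eq_square)
  then have "\<forall>i\<in>{1..7}. quat_rotate a e i x = c i"
    using a by (simp add: ball_1_to_7 quat_rotate_ge_5 ex)
  then show "\<exists>x\<in>UNIV. \<forall>i\<in>{1..7}. quat_rotate a e i x = c i" by blast
qed

section \<open>The SL(3,R)-coframe on the hyperplane ker e^1\<close>

definition sl3_coframe :: "(nat \<Rightarrow> 'a \<Rightarrow> real) \<Rightarrow> nat \<Rightarrow> 'a \<Rightarrow> real" where
  "sl3_coframe g k x =
    (if k = 1 then sqrt 2/2 * (g 2 x - sqrt 3 * g 5 x) else if k = 2 then - sqrt 2/2 * (g 2 x + sqrt 3 * g 5 x)
     else if k = 3 then sqrt 2/2 * (g 3 x - sqrt 3 * g 6 x) else if k = 4 then - sqrt 2/2 * (g 3 x + sqrt 3 * g 6 x)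
     else if k = 5 then sqrt 2/2 * (g 4 x - sqrt 3 * g 7 x) else - sqrt 2/2 * (g 4 x + sqrt 3 * g 7 x))"

lemma linear_coframe6_sl3_coframe:
  assumes "linear (g 2)" "linear (g 3)" "linear (g 4)" "linear (g 5)" "linear (g 6)" "linear (g 7)"
  shows "linear_coframe6 (sl3_coframe g)"
proof -
  have calc: "sl3_coframe g 1 = (\<lambda>x. (sqrt 2/2) * g 2 x + (- sqrt 2 * sqrt 3/2) * g 5 x)"
     "sl3_coframe g 2 = (\<lambda>x. (- sqrt 2/2) * g 2 x + (- sqrt 2 * sqrt 3/2) * g 5 x)"
     "sl3_coframe g 3 = (\<lambda>x. (sqrt 2/2) * g 3 x + (- sqrt 2 * sqrt 3/2) * g 6 x)"
     "sl3_coframe g 4 = (\<lambda>x. (- sqrt 2/2) * g 3 x + (- sqrt 2 * sqrt 3/2) * g 6 x)"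
     "sl3_coframe g 5 = (\<lambda>x. (sqrt 2/2) * g 4 x + (- sqrt 2 * sqrt 3/2) * g 7 x)"
     "sl3_coframe g 6 = (\<lambda>x. (- sqrt 2/2) * g 4 x + (- sqrt 2 * sqrt 3/2) * g 7 x)"
    by (simp_all add: sl3_coframe_def fun_eq_iff algebra_simps)
  show ?thesis unfolding linear_coframe6_def calc by (intro conjI linear_lincomb2 assms)
qed

lemma coframe_sl3_coframe:
  assumes cof: "coframe 7 UNIV g"
  shows "coframe 6 {x. g 1 x = 0} (sl3_coframe g)"
  unfolding coframe_def
proof (intro conjI ballI allI impI)
  have "linear_coframe6 (sl3_coframe g)"
    using cof by (intro linear_coframe6_sl3_coframe) (simp_all add: coframe_def)
  then have "\<forall>i\<in>{1..6}. linear (sl3_coframe g i)" by (simp add: linear_coframe6_def ball_1_to_6)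
  moreover fix i :: nat assume "i \<in> {1..6}"
  ultimately show "linear (sl3_coframe g i)" by blast
next
  have pair_zero: "sqrt 2/2 * (A - sqrt 3 * B) = 0 \<Longrightarrow> - sqrt 2/2 * (A + sqrt 3 * B) = 0 \<Longrightarrow> A = 0 \<and> B = 0"
    for A B :: real by (simp add: algebra_simps)
  fix x assume "x \<in> {x. g 1 x = 0}" and "\<forall>i\<in>{1..6}. sl3_coframe g i x = 0"
  then have "g 1 x = 0" and "\<forall>i\<in>{2..7}. g i x = 0"
    using pair_zero[of "g 2 x" "g 5 x"] pair_zero[of "g 3 x" "g 6 x"] pair_zero[of "g 4 x" "g 7 x"]
    by (auto simp: ball_1_to_6 sl3_coframe_def numeral_eq_Suc atLeastAtMostSuc_conv)
  then have "\<forall>i\<in>{1..7}. g i x = 0" by (auto simp: ball_1_to_7)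
  then show "x = 0" using cof by (simp add: coframe_def)
next
  fix c :: "nat \<Rightarrow> real"
  define d where "d k = (if k = 2 then sqrt 2/2 * (c 1 - c 2) else if k = 3 then sqrt 2/2 * (c 3 - c 4)
     else if k = 4 then sqrt 2/2 * (c 5 - c 6) else if k = 5 then - (sqrt 2 * sqrt 3/6) * (c 1 + c 2)
     else if k = 6 then - (sqrt 2 * sqrt 3/6) * (c 3 + c 4) else if k = 7 then - (sqrt 2 * sqrt 3/6) * (c 5 + c 6)
     else 0)" for k :: nat
  obtain x where "\<forall>i\<in>{1..7}. g i x = d i" using cof unfolding coframe_def by blast
  then have gx: "g 1 x = 0" "g 2 x = d 2" "g 3 x = d 3" "g 4 x = d 4" "g 5 x = d 5" "g 6 x = d 6" "g 7 x = d 7"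
    by (simp_all add: ball_1_to_7 d_def)
  have "\<forall>i\<in>{1..6}. sl3_coframe g i x = c i" unfolding ball_1_to_6
    by (simp add: sl3_coframe_def gx d_def algebra_simps sqrt_2_sqrt_2 sqrt_3_sqrt_3, simp add: field_simps)
  then show "\<exists>x\<in>{x. g 1 x = 0}. \<forall>i\<in>{1..6}. sl3_coframe g i x = c i" using gx(1) by blast
qed

section \<open>Restricting \<alpha> and \<beta> to the hyperplane\<close>

lemma so4_alpha_restrict:
  assumes "g 1 x = 0" "g 1 y = 0" "g 1 z = 0"
  shows "so4_alpha g [x,y,z] = sqrt 6/3 * sl3_rho (sl3_coframe g) [x,y,z]"
  unfolding so4_alpha_expand sl3_rho_def wedge_2_1_eval wedge1_eval1 wedge1_eval2 wedge1_eval3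
  by (simp add: so4_om_def sl3_coframe_def assms sqrt_6_eq algebra_simps sqrt_2_sqrt_2 sqrt_3_sqrt_3
      wedge1_eval2 add_divide_distrib diff_divide_distrib)

lemma so4_beta_restrict:
  assumes "g 1 x = 0" "g 1 y = 0" "g 1 z = 0" "g 1 u = 0"
  shows "so4_beta g [x,y,z,u] = - 1/6 * sl3_omega2 (sl3_coframe g) [x,y,z,u]"
  unfolding so4_beta_def sl3_omega2_eval
  unfolding wedge_2_2_eval wedge1_eval2 wedge1_eval4
  by (simp add: so4_om_def sl3_coframe_def assms algebra_simps sqrt_2_sqrt_2 sqrt_3_sqrt_3 wedge1_eval2
      add_divide_distrib diff_divide_distrib)

lemma so4_beta_decompose:
  "so4_beta g [p,q,r,s] = - (sqrt 2/3) *
     (g 1 p * (sl3_rhohat (sl3_coframe g) [q,r,s] + 2 * sl3_gamma (sl3_coframe g) [q,r,s])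
    - g 1 q * (sl3_rhohat (sl3_coframe g) [p,r,s] + 2 * sl3_gamma (sl3_coframe g) [p,r,s])
    + g 1 r * (sl3_rhohat (sl3_coframe g) [p,q,s] + 2 * sl3_gamma (sl3_coframe g) [p,q,s])
    - g 1 s * (sl3_rhohat (sl3_coframe g) [p,q,r] + 2 * sl3_gamma (sl3_coframe g) [p,q,r]))
   - 1/6 * sl3_omega2 (sl3_coframe g) [p,q,r,s]"
  unfolding so4_beta_def sl3_omega2_eval
  unfolding sl3_rhohat_def sl3_gamma_def wedge_2_2_eval wedge1_eval2 wedge1_eval3 wedge1_eval4
  by (simp add: so4_om_def sl3_coframe_def algebra_simps sqrt_2_sqrt_2 sqrt_3_sqrt_3 wedge1_eval2
      add_divide_distrib diff_divide_distrib)

lemma dform_so4_alpha_restrict: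
  assumes sub: "\<And>x y. g 1 x = 0 \<Longrightarrow> g 1 y = 0 \<Longrightarrow> g 1 (br x y) = 0"
    and n: "g 1 x0 = 0" "g 1 x1 = 0" "g 1 x2 = 0" "g 1 x3 = 0"
  shows "dform br (so4_alpha g) [x0,x1,x2,x3] = sqrt 6/3 * dform br (sl3_rho (sl3_coframe g)) [x0,x1,x2,x3]"
  unfolding dform_eval4 by (simp add: so4_alpha_restrict sub n algebra_simps)

lemma dform_so4_beta_restrict:
  assumes sub: "\<And>x y. g 1 x = 0 \<Longrightarrow> g 1 y = 0 \<Longrightarrow> g 1 (br x y) = 0"
    and n: "g 1 x0 = 0" "g 1 x1 = 0" "g 1 x2 = 0" "g 1 x3 = 0" "g 1 x4 = 0"
  shows "dform br (so4_beta g) [x0,x1,x2,x3,x4] = - 1/6 * dform br (sl3_omega2 (sl3_coframe g)) [x0,x1,x2,x3,x4]"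
  unfolding dform_eval5 by (simp add: so4_beta_restrict sub n algebra_simps)

lemma sl3_rho_closed_if_so4_alpha_closed:
  assumes sub: "\<And>x y. g 1 x = 0 \<Longrightarrow> g 1 y = 0 \<Longrightarrow> g 1 (br x y) = 0"
    and d\<alpha>: "\<forall>xs. length xs = 4 \<longrightarrow> dform br (so4_alpha g) xs = 0"
    and n: "g 1 x0 = 0" "g 1 x1 = 0" "g 1 x2 = 0" "g 1 x3 = 0"
  shows "dform br (sl3_rho (sl3_coframe g)) [x0,x1,x2,x3] = 0"
proof -
  have "sqrt 6/3 * dform br (sl3_rho (sl3_coframe g)) [x0,x1,x2,x3] = dform br (so4_alpha g) [x0,x1,x2,x3]"
    by (rule dform_so4_alpha_restrict[of g br, OF sub n, symmetric])
  also have "\<dots> = 0" using d\<alpha> by simp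
  finally show ?thesis by simp
qed

lemma sl3_omega2_closed_if_so4_beta_closed:
  assumes sub: "\<And>x y. g 1 x = 0 \<Longrightarrow> g 1 y = 0 \<Longrightarrow> g 1 (br x y) = 0"
    and d\<beta>: "\<forall>xs. length xs = 5 \<longrightarrow> dform br (so4_beta g) xs = 0"
    and n: "g 1 x0 = 0" "g 1 x1 = 0" "g 1 x2 = 0" "g 1 x3 = 0" "g 1 x4 = 0"
  shows "dform br (sl3_omega2 (sl3_coframe g)) [x0,x1,x2,x3,x4] = 0"
proof -
  have "- 1/6 * dform br (sl3_omega2 (sl3_coframe g)) [x0,x1,x2,x3,x4] = dform br (so4_beta g) [x0,x1,x2,x3,x4]"
    by (rule dform_so4_beta_restrict[of g br, OF sub n, symmetric])
  also have "\<dots> = 0" using d\<beta> by simp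
  finally show ?thesis by simp
qed

context
  fixes g :: "nat \<Rightarrow> 'a::real_vector \<Rightarrow> real" and v :: 'a
  assumes g_v: "g 1 v = 1" "g 2 v = 0" "g 3 v = 0" "g 4 v = 0" "g 5 v = 0" "g 6 v = 0" "g 7 v = 0"
begin

lemma sl3_omega_eq_so4_alpha_contract:
  assumes "g 1 y = 0" "g 1 z = 0"
  shows "sl3_omega (sl3_coframe g) [y,z] = - sqrt 3 * so4_alpha g [v,y,z]"
  unfolding so4_alpha_expand sl3_omega_def wedge_2_1_eval wedge1_eval1 wedge1_eval2 wedge1_eval3
  by (simp add: so4_om_def sl3_coframe_def assms g_v algebra_simps sqrt_2_sqrt_2 sqrt_3_sqrt_3 wedge1_eval2
      add_divide_distrib diff_divide_distrib)

lemma so4_alpha_contract_second: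
  assumes "g 1 x = 0" "g 1 z = 0"
  shows "so4_alpha g [x,v,z] = sqrt 3/3 * sl3_omega (sl3_coframe g) [x,z]"
proof -
  have "sl3_omega (sl3_coframe g) [x,z] = sqrt 3 * so4_alpha g [x,v,z]"
    unfolding so4_alpha_expand sl3_omega_def wedge_2_1_eval wedge1_eval1 wedge1_eval2 wedge1_eval3
    by (simp add: so4_om_def sl3_coframe_def assms g_v algebra_simps sqrt_2_sqrt_2 sqrt_3_sqrt_3
        wedge1_eval2 add_divide_distrib diff_divide_distrib)
  then show ?thesis by (simp add: sqrt_3_sqrt_3 mult.assoc[symmetric])
qed

lemma so4_beta_contract_second:
  assumes "g 1 x = 0" "g 1 y = 0" "g 1 z = 0"
  shows "so4_beta g [x,v,y,z] =
    sqrt 2/3 * (sl3_rhohat (sl3_coframe g) [x,y,z] + 2 * sl3_gamma (sl3_coframe g) [x,y,z])"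
proof -
  have "sl3_omega2 (sl3_coframe g) [x,v,y,z] = 0"
    by (simp add: sl3_omega2_eval wedge1_eval4 sl3_coframe_def g_v)
  then show ?thesis using so4_beta_decompose[of g x v y z] by (simp add: assms g_v algebra_simps)
qed

lemma dform_so4_alpha_contract:
  assumes bil: "bilinear br" and lin: "linear_coframe6 (sl3_coframe g)"
    and idl: "\<forall>x y. g 1 y = 0 \<longrightarrow> g 1 (br x y) = 0"
    and n: "g 1 x1 = 0" "g 1 x2 = 0" "g 1 x3 = 0"
  shows "der_act (\<lambda>x. br (sqrt 2 *\<^sub>R v) x) (sl3_rho (sl3_coframe g)) [x1,x2,x3]
      + dform br (sl3_omega (sl3_coframe g)) [x1,x2,x3] = sqrt 3 * dform br (so4_alpha g) [v,x1,x2,x3]"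
proof -
  have scale: "br (sqrt 2 *\<^sub>R v) x = sqrt 2 *\<^sub>R br v x" for x using bilinear_lmul[OF bil] by simp
  have swap: "sl3_rho (sl3_coframe g) [x1, br (sqrt 2 *\<^sub>R v) x2, x3] = - sl3_rho (sl3_coframe g) [br (sqrt 2 *\<^sub>R v) x2, x1, x3]"
     "sl3_rho (sl3_coframe g) [x1, x2, br (sqrt 2 *\<^sub>R v) x3] = sl3_rho (sl3_coframe g) [br (sqrt 2 *\<^sub>R v) x3, x1, x2]"
    by (rule sl3_rho_swap)+
  show ?thesis
    unfolding der_act_eval3 dform_eval3 dform_eval4 swap
    unfolding scale linear_coframe6.sl3_rho_lin(2)[OF lin]
    by (simp add: so4_alpha_restrict so4_alpha_contract_second idl n algebra_simps sqrt_6_eq sqrt_3_sqrt_3)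
qed

lemma dform_so4_beta_contract:
  assumes bil: "bilinear br" and lin: "linear_coframe6 (sl3_coframe g)"
    and idl: "\<forall>x y. g 1 y = 0 \<longrightarrow> g 1 (br x y) = 0"
    and n: "g 1 x1 = 0" "g 1 x2 = 0" "g 1 x3 = 0" "g 1 x4 = 0"
  shows "- 1/4 * der_act (\<lambda>x. br (sqrt 2 *\<^sub>R v) x) (sl3_omega2 (sl3_coframe g)) [x1,x2,x3,x4]
      + dform br (sl3_rhohat (sl3_coframe g)) [x1,x2,x3,x4] + 2 * dform br (sl3_gamma (sl3_coframe g)) [x1,x2,x3,x4]
    = (3 * sqrt 2 / 2) * dform br (so4_beta g) [v,x1,x2,x3,x4]"
proof -
  have scale: "br (sqrt 2 *\<^sub>R v) x = sqrt 2 *\<^sub>R br v x" for x using bilinear_lmul[OF bil] by simp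
  have swap: "sl3_omega2 (sl3_coframe g) [x1, br (sqrt 2 *\<^sub>R v) x2, x3, x4] = - sl3_omega2 (sl3_coframe g) [br (sqrt 2 *\<^sub>R v) x2, x1, x3, x4]"
    "sl3_omega2 (sl3_coframe g) [x1, x2, br (sqrt 2 *\<^sub>R v) x3, x4] = sl3_omega2 (sl3_coframe g) [br (sqrt 2 *\<^sub>R v) x3, x1, x2, x4]"
    "sl3_omega2 (sl3_coframe g) [x1, x2, x3, br (sqrt 2 *\<^sub>R v) x4] = - sl3_omega2 (sl3_coframe g) [br (sqrt 2 *\<^sub>R v) x4, x1, x2, x3]"
    by (rule sl3_omega2_swap)+
  show ?thesis
    unfolding der_act_eval4 dform_eval4 dform_eval5 swap
    unfolding scale linear_coframe6.sl3_omega2_lin(2)[OF lin]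
    by (simp add: so4_beta_restrict so4_beta_contract_second idl n algebra_simps sqrt_2_sqrt_2)
qed

lemma first_ideal_equation_if_so4_alpha_closed:
  assumes bil: "bilinear br" and lin: "linear_coframe6 (sl3_coframe g)"
    and idl: "\<forall>x y. g 1 y = 0 \<longrightarrow> g 1 (br x y) = 0"
    and d\<alpha>: "\<forall>xs. length xs = 4 \<longrightarrow> dform br (so4_alpha g) xs = 0"
    and n: "g 1 x1 = 0" "g 1 x2 = 0" "g 1 x3 = 0"
  shows "der_act (\<lambda>x. br (sqrt 2 *\<^sub>R v) x) (sl3_rho (sl3_coframe g)) [x1,x2,x3]
      + dform br (sl3_omega (sl3_coframe g)) [x1,x2,x3] = 0"
proof -
  have "dform br (so4_alpha g) [v,x1,x2,x3] = 0" using d\<alpha> by simp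
  then show ?thesis unfolding dform_so4_alpha_contract[OF bil lin idl n] by simp
qed

lemma second_ideal_equation_if_so4_beta_closed:
  assumes bil: "bilinear br" and lin: "linear_coframe6 (sl3_coframe g)"
    and idl: "\<forall>x y. g 1 y = 0 \<longrightarrow> g 1 (br x y) = 0"
    and d\<beta>: "\<forall>xs. length xs = 5 \<longrightarrow> dform br (so4_beta g) xs = 0"
    and n: "g 1 x1 = 0" "g 1 x2 = 0" "g 1 x3 = 0" "g 1 x4 = 0"
  shows "- 1/4 * der_act (\<lambda>x. br (sqrt 2 *\<^sub>R v) x) (sl3_omega2 (sl3_coframe g)) [x1,x2,x3,x4]
      + dform br (sl3_rhohat (sl3_coframe g)) [x1,x2,x3,x4]
      + 2 * dform br (sl3_gamma (sl3_coframe g)) [x1,x2,x3,x4] = 0"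
proof -
  have "dform br (so4_beta g) [v,x1,x2,x3,x4] = 0" using d\<beta> by simp
  then show ?thesis unfolding dform_so4_beta_contract[OF bil lin idl n] by simp
qed

end

lemma lie_algebra_bilinear: "lie_algebra br \<Longrightarrow> bilinear br"
  by (simp add: lie_algebra_def)

lemma harmonic_so4_hyperplane_half_flat:
  fixes br :: "'a::real_vector \<Rightarrow> 'a \<Rightarrow> 'a" and e :: "nat \<Rightarrow> 'a \<Rightarrow> real" and \<alpha> \<beta> :: "'a form"
    and a :: "nat \<Rightarrow> real" and v :: 'a
  assumes bil: "bilinear br" and cof: "coframe 7 UNIV e"
    and \<alpha>_e: "\<forall>xs. length xs = 3 \<longrightarrow> \<alpha> xs = so4_alpha e xs"
    and \<beta>_e: "\<forall>xs. length xs = 4 \<longrightarrow> \<beta> xs = so4_beta e xs"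
    and d\<alpha>: "\<forall>xs. length xs = 4 \<longrightarrow> dform br \<alpha> xs = 0"
    and d\<beta>: "\<forall>xs. length xs = 5 \<longrightarrow> dform br \<beta> xs = 0"
    and unit: "(\<Sum>i=1..4. (a i)\<^sup>2) = 1"
    and e_v: "\<forall>j\<in>{1..7}. e j v = (if j \<le> 4 then a j else 0)"
    and subalg: "\<forall>x y. (\<Sum>i=1..4. a i * e i x) = 0 \<longrightarrow> (\<Sum>i=1..4. a i * e i y) = 0 \<longrightarrow>
            (\<Sum>i=1..4. a i * e i (br x y)) = 0"
  shows "(let n = {x. (\<Sum>i=1..4. a i * e i x) = 0} in
      \<exists>E. coframe 6 n E \<and>
        (\<forall>xs. length xs = 3 \<and> set xs \<subseteq> n \<longrightarrow> \<alpha> xs = sqrt 6 / 3 * sl3_rho E xs) \<and>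
        (\<forall>xs. length xs = 4 \<and> set xs \<subseteq> n \<longrightarrow> \<beta> xs = - 1/6 * sl3_omega2 E xs) \<and>
        (\<forall>xs. length xs = 2 \<and> set xs \<subseteq> n \<longrightarrow> sl3_omega E xs = - sqrt 3 * \<alpha> (v # xs)) \<and>
        (\<forall>xs. length xs = 4 \<and> set xs \<subseteq> n \<longrightarrow> dform br (sl3_rho E) xs = 0) \<and>
        (\<forall>xs. length xs = 5 \<and> set xs \<subseteq> n \<longrightarrow> dform br (sl3_omega2 E) xs = 0) \<and>
        ((\<forall>x y. y \<in> n \<longrightarrow> br x y \<in> n) \<longrightarrow>
          (let b = (\<lambda>x. br (sqrt 2 *\<^sub>R v) x) in
           (\<forall>xs. length xs = 3 \<and> set xs \<subseteq> n \<longrightarrow>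
              der_act b (sl3_rho E) xs + dform br (sl3_omega E) xs = 0) \<and>
           (\<forall>xs. length xs = 4 \<and> set xs \<subseteq> n \<longrightarrow>
              - 1/4 * der_act b (sl3_omega2 E) xs
              + dform br (sl3_rhohat E) xs + 2 * dform br (sl3_gamma E) xs = 0))))"
proof -
  define g where "g = quat_rotate a e"
  have a: "a 1^2 + a 2^2 + a 3^2 + a 4^2 = 1" using unit by (simp add: sum_1_to_4)
  have \<eta>: "(\<Sum>i=1..4. a i * e i x) = g 1 x" for x by (simp add: sum_1_to_4 g_def quat_rotate_def)
  have cof_g: "coframe 7 UNIV g" unfolding g_def by (rule coframe_quat_rotate[OF cof a])
  have lin: "linear_coframe6 (sl3_coframe g)"
    using cof_g by (intro linear_coframe6_sl3_coframe) (simp_all add: coframe_def)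
  have \<alpha>_g: "\<forall>xs. length xs = 3 \<longrightarrow> \<alpha> xs = so4_alpha g xs"
    using \<alpha>_e unfolding all_lists_length_UNIV by (simp add: g_def so4_alpha_quat_rotate[OF a])
  have \<beta>_g: "\<forall>xs. length xs = 4 \<longrightarrow> \<beta> xs = so4_beta g xs"
    using \<beta>_e unfolding all_lists_length_UNIV by (simp add: g_def so4_beta_quat_rotate[OF a])
  have d\<alpha>_g: "\<forall>xs. length xs = 4 \<longrightarrow> dform br (so4_alpha g) xs = 0"
    using dform_eq_0_cong[OF \<alpha>_g, of br] d\<alpha> by simp
  have d\<beta>_g: "\<forall>xs. length xs = 5 \<longrightarrow> dform br (so4_beta g) xs = 0"
    using dform_eq_0_cong[OF \<beta>_g, of br] d\<beta> by simp
  have g_v: "g 1 v = 1" "g 2 v = 0" "g 3 v = 0" "g 4 v = 0" "g 5 v = 0" "g 6 v = 0" "g 7 v = 0"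
    using a e_v by (simp_all add: g_def quat_rotate_def ball_1_to_7 power2_eq_square)
  have sub: "g 1 x = 0 \<Longrightarrow> g 1 y = 0 \<Longrightarrow> g 1 (br x y) = 0" for x y using subalg by (simp add: \<eta>)
  have \<alpha>_n: "\<alpha> [x,y,z] = sqrt 6 / 3 * sl3_rho (sl3_coframe g) [x,y,z]"
    if "g 1 x = 0" "g 1 y = 0" "g 1 z = 0" for x y z
    using \<alpha>_g so4_alpha_restrict[of g, OF that] by simp
  have \<beta>_n: "\<beta> [x,y,z,u] = - 1/6 * sl3_omega2 (sl3_coframe g) [x,y,z,u]"
    if "g 1 x = 0" "g 1 y = 0" "g 1 z = 0" "g 1 u = 0" for x y z u
    using \<beta>_g so4_beta_restrict[of g, OF that] by simp
  have \<omega>_n: "sl3_omega (sl3_coframe g) [x,y] = - sqrt 3 * \<alpha> [v,x,y]" if "g 1 x = 0" "g 1 y = 0" for x y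
    using \<alpha>_g sl3_omega_eq_so4_alpha_contract[of g v, OF g_v that] by simp
  show ?thesis
    unfolding Let_def \<eta> all_lists_length_2 all_lists_length_3 all_lists_length_4
      all_lists_length_5 mem_Collect_eq
  proof (intro exI[of _ "sl3_coframe g"] conjI allI impI)
    show "coframe 6 {x. g 1 x = 0} (sl3_coframe g)" by (rule coframe_sl3_coframe[OF cof_g])
  qed (rule \<alpha>_n \<beta>_n \<omega>_n
      sl3_rho_closed_if_so4_alpha_closed[of g br, OF sub d\<alpha>_g]
      sl3_omega2_closed_if_so4_beta_closed[of g br, OF sub d\<beta>_g]
      first_ideal_equation_if_so4_alpha_closed[of g v br, OF g_v bil lin _ d\<alpha>_g]
      second_ideal_equation_if_so4_beta_closed[of g v br, OF g_v bil lin _ d\<beta>_g]; assumption)+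
qed

section \<open>The semidirect product n \<rtimes>_b R\<close>

(* e^1 = \<surd>2 dt, so that \<eta>^# = T/\<surd>2 and ad(\<surd>2 \<eta>^#) = b; the other six forms invert
   sl3_coframe. *)
definition so4_coframe :: "(nat \<Rightarrow> 'n \<Rightarrow> real) \<Rightarrow> nat \<Rightarrow> 'n \<times> real \<Rightarrow> real" where
  "so4_coframe E k p =
    (if k = 1 then sqrt 2 * snd p
     else if k = 2 then sqrt 2/2 * (E 1 (fst p) - E 2 (fst p))
     else if k = 3 then sqrt 2/2 * (E 3 (fst p) - E 4 (fst p))
     else if k = 4 then sqrt 2/2 * (E 5 (fst p) - E 6 (fst p))
     else if k = 5 then - (sqrt 2 * sqrt 3/6) * (E 1 (fst p) + E 2 (fst p))
     else if k = 6 then - (sqrt 2 * sqrt 3/6) * (E 3 (fst p) + E 4 (fst p))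
     else - (sqrt 2 * sqrt 3/6) * (E 5 (fst p) + E 6 (fst p)))"

lemma sl3_coframe_so4_coframe:
  "sl3_coframe (so4_coframe E) 1 p = E 1 (fst p)" "sl3_coframe (so4_coframe E) 2 p = E 2 (fst p)"
  "sl3_coframe (so4_coframe E) 3 p = E 3 (fst p)" "sl3_coframe (so4_coframe E) 4 p = E 4 (fst p)"
  "sl3_coframe (so4_coframe E) 5 p = E 5 (fst p)" "sl3_coframe (so4_coframe E) 6 p = E 6 (fst p)"
  by (simp_all add: sl3_coframe_def so4_coframe_def algebra_simps sqrt_2_sqrt_2 sqrt_3_sqrt_3
      add_divide_distrib diff_divide_distrib)

lemma linear_lincomb2_fst:
  fixes f h :: "'n::real_vector \<Rightarrow> real"
  assumes "linear f" "linear h"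
  shows "linear (\<lambda>p::'n \<times> real. c * (f (fst p) + d * h (fst p)))"
  by (rule linearI) (simp_all add: linear_add[OF assms(1)] linear_add[OF assms(2)]
      linear_scale[OF assms(1)] linear_scale[OF assms(2)] algebra_simps)

lemma coframe_so4_coframe:
  fixes E :: "nat \<Rightarrow> 'n::real_vector \<Rightarrow> real"
  assumes cof: "coframe 6 UNIV E"
  shows "coframe 7 UNIV (so4_coframe E)"
  unfolding coframe_def
proof (intro conjI ballI allI impI)
  have l: "linear (E 1)" "linear (E 2)" "linear (E 3)" "linear (E 4)" "linear (E 5)" "linear (E 6)"
    using cof by (simp_all add: coframe_def ball_1_to_6)
  have calc: "so4_coframe E 2 = (\<lambda>p. sqrt 2/2 * (E 1 (fst p) + (-1) * E 2 (fst p)))"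
    "so4_coframe E 3 = (\<lambda>p. sqrt 2/2 * (E 3 (fst p) + (-1) * E 4 (fst p)))"
    "so4_coframe E 4 = (\<lambda>p. sqrt 2/2 * (E 5 (fst p) + (-1) * E 6 (fst p)))"
    "so4_coframe E 5 = (\<lambda>p. - (sqrt 2 * sqrt 3/6) * (E 1 (fst p) + 1 * E 2 (fst p)))"
    "so4_coframe E 6 = (\<lambda>p. - (sqrt 2 * sqrt 3/6) * (E 3 (fst p) + 1 * E 4 (fst p)))"
    "so4_coframe E 7 = (\<lambda>p. - (sqrt 2 * sqrt 3/6) * (E 5 (fst p) + 1 * E 6 (fst p)))"
    by (simp_all add: so4_coframe_def fun_eq_iff)
  have "linear (so4_coframe E 1)" by (rule linearI) (simp_all add: so4_coframe_def algebra_simps)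
  moreover have "linear (so4_coframe E 2)" "linear (so4_coframe E 5)"
    unfolding calc by (rule linear_lincomb2_fst[OF l(1,2)])+
  moreover have "linear (so4_coframe E 3)" "linear (so4_coframe E 6)"
    unfolding calc by (rule linear_lincomb2_fst[OF l(3,4)])+
  moreover have "linear (so4_coframe E 4)" "linear (so4_coframe E 7)"
    unfolding calc by (rule linear_lincomb2_fst[OF l(5,6)])+
  moreover fix i :: nat assume "i \<in> {1..7}"
  then have "i \<in> {1,2,3,4,5,6,7}" by auto
  ultimately show "linear (so4_coframe E i)" by auto
next
  fix p :: "'n \<times> real" assume "\<forall>i\<in>{1..7}. so4_coframe E i p = 0"
  then have "snd p = 0" and "\<forall>i\<in>{1..6}. E i (fst p) = 0"
    by (auto simp: ball_1_to_7 ball_1_to_6 so4_coframe_def algebra_simps)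
  then show "p = 0" using cof by (simp add: coframe_def prod_eq_iff)
next
  fix c :: "nat \<Rightarrow> real"
  define d where "d k = (if k = 1 then sqrt 2/2*(c 2 - sqrt 3 * c 5) else if k = 2 then - (sqrt 2/2*(c 2 + sqrt 3 * c 5))
    else if k = 3 then sqrt 2/2*(c 3 - sqrt 3 * c 6) else if k = 4 then - (sqrt 2/2*(c 3 + sqrt 3 * c 6))
    else if k = 5 then sqrt 2/2*(c 4 - sqrt 3 * c 7) else - (sqrt 2/2*(c 4 + sqrt 3 * c 7)))" for k :: nat
  obtain x where "\<forall>i\<in>{1..6}. E i x = d i" using cof unfolding coframe_def by blast
  then have Ex: "E 1 x = d 1" "E 2 x = d 2" "E 3 x = d 3" "E 4 x = d 4" "E 5 x = d 5" "E 6 x = d 6"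
    by (simp_all add: ball_1_to_6)
  have "\<forall>i\<in>{1..7}. so4_coframe E i (x, c 1 / sqrt 2) = c i" unfolding ball_1_to_7
    by (simp add: so4_coframe_def Ex d_def algebra_simps sqrt_2_sqrt_2 sqrt_3_sqrt_3)
  then show "\<exists>p\<in>UNIV. \<forall>i\<in>{1..7}. so4_coframe E i p = c i" by blast
qed

lemma so4_alpha_so4_coframe: "so4_alpha (so4_coframe E) [p,q,r] =
   - (sqrt 6/3) * (snd p * sl3_omega E [fst q, fst r] - snd q * sl3_omega E [fst p, fst r]
                   + snd r * sl3_omega E [fst p, fst q])
   + sqrt 6/3 * sl3_rho E [fst p, fst q, fst r]"
  unfolding so4_alpha_expand sl3_omega_def sl3_rho_def wedge_2_1_eval wedge1_eval1 wedge1_eval2 wedge1_eval3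
  by (simp add: so4_om_def so4_coframe_def sqrt_6_eq algebra_simps sqrt_2_sqrt_2 sqrt_3_sqrt_3 wedge1_eval2
      add_divide_distrib diff_divide_distrib)

lemma so4_beta_so4_coframe: "so4_beta (so4_coframe E) [p,q,r,s] = - (2/3) *
     (snd p * (sl3_rhohat E [fst q, fst r, fst s] + 2 * sl3_gamma E [fst q, fst r, fst s])
    - snd q * (sl3_rhohat E [fst p, fst r, fst s] + 2 * sl3_gamma E [fst p, fst r, fst s])
    + snd r * (sl3_rhohat E [fst p, fst q, fst s] + 2 * sl3_gamma E [fst p, fst q, fst s])
    - snd s * (sl3_rhohat E [fst p, fst q, fst r] + 2 * sl3_gamma E [fst p, fst q, fst r]))
   - 1/6 * sl3_omega2 E [fst p, fst q, fst r, fst s]"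
proof -
  have "sl3_rhohat (sl3_coframe (so4_coframe E)) [p,q,r] = sl3_rhohat E [fst p, fst q, fst r]"
    "sl3_gamma (sl3_coframe (so4_coframe E)) [p,q,r] = sl3_gamma E [fst p, fst q, fst r]"
    "sl3_omega2 (sl3_coframe (so4_coframe E)) [p,q,r,s] = sl3_omega2 E [fst p, fst q, fst r, fst s]"
    "so4_coframe E 1 p = sqrt 2 * snd p" for p q r s
    by (simp_all add: sl3_rhohat_def sl3_gamma_def sl3_omega2_eval wedge1_eval3 wedge1_eval4
        sl3_coframe_so4_coframe so4_coframe_def)
  then show ?thesis unfolding so4_beta_decompose by (simp add: algebra_simps sqrt_2_sqrt_2)
qed

context
  fixes E :: "nat \<Rightarrow> 'n::real_vector \<Rightarrow> real" and brn :: "'n \<Rightarrow> 'n \<Rightarrow> 'n" and b :: "'n \<Rightarrow> 'n"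
  assumes lin: "linear_coframe6 E"
begin

lemma dform_semidirect_so4_alpha:
  defines "K \<equiv> \<lambda>xs. der_act b (sl3_rho E) xs + dform brn (sl3_omega E) xs"
  shows "dform (semidirect brn b) (so4_alpha (so4_coframe E)) [(x0,t0),(x1,t1),(x2,t2),(x3,t3)]
     = sqrt 6/3 * dform brn (sl3_rho E) [x0,x1,x2,x3]
       + sqrt 6/3 * (t0 * K [x1,x2,x3] - t1 * K [x0,x2,x3] + t2 * K [x0,x1,x3] - t3 * K [x0,x1,x2])"
proof -
  have swap: "sl3_rho E [x1, b x2, x3] = - sl3_rho E [b x2, x1, x3]" "sl3_rho E [x1, x2, b x3] = sl3_rho E [b x3, x1, x2]"
    "sl3_rho E [x0, b x2, x3] = - sl3_rho E [b x2, x0, x3]" "sl3_rho E [x0, x2, b x3] = sl3_rho E [b x3, x0, x2]"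
    "sl3_rho E [x0, b x1, x3] = - sl3_rho E [b x1, x0, x3]" "sl3_rho E [x0, x1, b x3] = sl3_rho E [b x3, x0, x1]"
    "sl3_rho E [x0, b x1, x2] = - sl3_rho E [b x1, x0, x2]" "sl3_rho E [x0, x1, b x2] = sl3_rho E [b x2, x0, x1]"
    by (rule sl3_rho_swap)+
  show ?thesis
    unfolding K_def dform_eval4 dform_eval3 der_act_eval3 semidirect_def so4_alpha_so4_coframe
      fst_conv snd_conv swap
    unfolding linear_coframe6.sl3_rho_lin(1)[OF lin] linear_coframe6.sl3_omega_lin[OF lin]
    by (simp add: algebra_simps)
qed

lemma dform_semidirect_so4_beta:
  defines "K \<equiv> \<lambda>xs. - 1/4 * der_act b (sl3_omega2 E) xs + dform brn (sl3_rhohat E) xs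
                      + 2 * dform brn (sl3_gamma E) xs"
  shows "dform (semidirect brn b) (so4_beta (so4_coframe E)) [(x0,t0),(x1,t1),(x2,t2),(x3,t3),(x4,t4)]
     = - 1/6 * dform brn (sl3_omega2 E) [x0,x1,x2,x3,x4]
       + 2/3 * (t0 * K [x1,x2,x3,x4] - t1 * K [x0,x2,x3,x4] + t2 * K [x0,x1,x3,x4]
                - t3 * K [x0,x1,x2,x4] + t4 * K [x0,x1,x2,x3])"
proof -
  have swap: "sl3_omega2 E [a, b c, d, e] = - sl3_omega2 E [b c, a, d, e]"
    "sl3_omega2 E [a, c, b d, e] = sl3_omega2 E [b d, a, c, e]"
    "sl3_omega2 E [a, c, d, b e] = - sl3_omega2 E [b e, a, c, d]" for a c d e
    by (rule sl3_omega2_swap)+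
  show ?thesis
    unfolding K_def dform_eval5 dform_eval4 der_act_eval4 semidirect_def so4_beta_so4_coframe
      fst_conv snd_conv swap
    unfolding linear_coframe6.sl3_omega2_lin(1)[OF lin] linear_coframe6.sl3_rhohat_lin[OF lin]
      linear_coframe6.sl3_gamma_lin[OF lin]
    by (simp add: algebra_simps)
qed

end

lemma semidirect_harmonic_so4:
  fixes brn :: "'n::real_vector \<Rightarrow> 'n \<Rightarrow> 'n" and b :: "'n \<Rightarrow> 'n" and E :: "nat \<Rightarrow> 'n \<Rightarrow> real"
  assumes cof: "coframe 6 UNIV E"
    and d\<rho>: "\<forall>xs. length xs = 4 \<longrightarrow> dform brn (sl3_rho E) xs = 0"
    and d\<omega>2: "\<forall>xs. length xs = 5 \<longrightarrow> dform brn (sl3_omega2 E) xs = 0"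
    and eq1: "\<forall>xs. length xs = 3 \<longrightarrow> der_act b (sl3_rho E) xs + dform brn (sl3_omega E) xs = 0"
    and eq2: "\<forall>xs. length xs = 4 \<longrightarrow>
        - 1/4 * der_act b (sl3_omega2 E) xs + dform brn (sl3_rhohat E) xs + 2 * dform brn (sl3_gamma E) xs = 0"
  shows "\<exists>e :: nat \<Rightarrow> 'n \<times> real \<Rightarrow> real. coframe 7 UNIV e \<and>
        (\<forall>xs. length xs = 4 \<longrightarrow> dform (semidirect brn b) (so4_alpha e) xs = 0) \<and>
        (\<forall>xs. length xs = 5 \<longrightarrow> dform (semidirect brn b) (so4_beta e) xs = 0)"
proof (intro exI[of _ "so4_coframe E"] conjI)
  have lin: "linear_coframe6 E" using cof by (simp add: coframe_def linear_coframe6_def ball_1_to_6)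
  show "coframe 7 UNIV (so4_coframe E)" by (rule coframe_so4_coframe[OF cof])
  show "\<forall>xs. length xs = 4 \<longrightarrow> dform (semidirect brn b) (so4_alpha (so4_coframe E)) xs = 0"
    using d\<rho> eq1 unfolding all_lists_length_UNIV split_paired_All
    by (simp add: dform_semidirect_so4_alpha[OF lin])
  show "\<forall>xs. length xs = 5 \<longrightarrow> dform (semidirect brn b) (so4_beta (so4_coframe E)) xs = 0"
    using d\<omega>2 eq2 unfolding all_lists_length_UNIV split_paired_All
    by (simp add: dform_semidirect_so4_beta[OF lin])
qed

theorem mainTheorem11:
  shows
  "(\<forall>(br :: 'a::euclidean_space \<Rightarrow> 'a \<Rightarrow> 'a) (e :: nat \<Rightarrow> 'a \<Rightarrow> real) (\<alpha> :: 'a form) (\<beta> :: 'a form)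
       (a :: nat \<Rightarrow> real) (v :: 'a).
     DIM('a) = 7 \<and> lie_algebra br \<and>
     coframe 7 UNIV e \<and>
     (\<forall>xs. length xs = 3 \<longrightarrow> \<alpha> xs = so4_alpha e xs) \<and>
     (\<forall>xs. length xs = 4 \<longrightarrow> \<beta> xs = so4_beta e xs) \<and>
     (\<forall>xs. length xs = 4 \<longrightarrow> dform br \<alpha> xs = 0) \<and>
     (\<forall>xs. length xs = 5 \<longrightarrow> dform br \<beta> xs = 0) \<and>
     (\<Sum>i=1..4. (a i)\<^sup>2) = 1 \<and>
     (\<forall>j\<in>{1..7}. e j v = (if j \<le> 4 then a j else 0)) \<and>
     (\<forall>x y. (\<Sum>i=1..4. a i * e i x) = 0 \<longrightarrow> (\<Sum>i=1..4. a i * e i y) = 0 \<longrightarrow>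
            (\<Sum>i=1..4. a i * e i (br x y)) = 0)
     \<longrightarrow>
     (let n = {x. (\<Sum>i=1..4. a i * e i x) = 0} in
      \<exists>E. coframe 6 n E \<and>
        (\<forall>xs. length xs = 3 \<and> set xs \<subseteq> n \<longrightarrow> \<alpha> xs = sqrt 6 / 3 * sl3_rho E xs) \<and>
        (\<forall>xs. length xs = 4 \<and> set xs \<subseteq> n \<longrightarrow>
              \<beta> xs = - 1/6 * wedge 2 2 (sl3_omega E) (sl3_omega E) xs) \<and>
        (\<forall>xs. length xs = 2 \<and> set xs \<subseteq> n \<longrightarrow> sl3_omega E xs = - sqrt 3 * \<alpha> (v # xs)) \<and>
        (\<forall>xs. length xs = 4 \<and> set xs \<subseteq> n \<longrightarrow> dform br (sl3_rho E) xs = 0) \<and>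
        (\<forall>xs. length xs = 5 \<and> set xs \<subseteq> n \<longrightarrow>
              dform br (wedge 2 2 (sl3_omega E) (sl3_omega E)) xs = 0) \<and>
        ((\<forall>x y. y \<in> n \<longrightarrow> br x y \<in> n) \<longrightarrow>
          (let b = (\<lambda>x. br (sqrt 2 *\<^sub>R v) x) in
           (\<forall>xs. length xs = 3 \<and> set xs \<subseteq> n \<longrightarrow>
              der_act b (sl3_rho E) xs + dform br (sl3_omega E) xs = 0) \<and>
           (\<forall>xs. length xs = 4 \<and> set xs \<subseteq> n \<longrightarrow>
              - 1/4 * der_act b (wedge 2 2 (sl3_omega E) (sl3_omega E)) xs
              + dform br (sl3_rhohat E) xs + 2 * dform br (sl3_gamma E) xs = 0)))))
   \<and>
   (\<forall>(brn :: 'n::euclidean_space \<Rightarrow> 'n \<Rightarrow> 'n) (b :: 'n \<Rightarrow> 'n) (E :: nat \<Rightarrow> 'n \<Rightarrow> real).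
     DIM('n) = 6 \<and> lie_algebra brn \<and> lie_derivation brn b \<and>
     coframe 6 UNIV E \<and>
     (\<forall>xs. length xs = 4 \<longrightarrow> dform brn (sl3_rho E) xs = 0) \<and>
     (\<forall>xs. length xs = 5 \<longrightarrow> dform brn (wedge 2 2 (sl3_omega E) (sl3_omega E)) xs = 0) \<and>
     (\<forall>xs. length xs = 3 \<longrightarrow> der_act b (sl3_rho E) xs + dform brn (sl3_omega E) xs = 0) \<and>
     (\<forall>xs. length xs = 4 \<longrightarrow>
        - 1/4 * der_act b (wedge 2 2 (sl3_omega E) (sl3_omega E)) xs
        + dform brn (sl3_rhohat E) xs + 2 * dform brn (sl3_gamma E) xs = 0)
     \<longrightarrow>
     (\<exists>e :: nat \<Rightarrow> 'n \<times> real \<Rightarrow> real. coframe 7 UNIV e \<and>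
        (\<forall>xs. length xs = 4 \<longrightarrow> dform (semidirect brn b) (so4_alpha e) xs = 0) \<and>
        (\<forall>xs. length xs = 5 \<longrightarrow> dform (semidirect brn b) (so4_beta e) xs = 0)))"
  by (intro conjI allI impI; elim conjE)
    (rule harmonic_so4_hyperplane_half_flat[OF lie_algebra_bilinear] semidirect_harmonic_so4; assumption)+

end
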